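(* Let $d\ge2$ and assume that for all finite families $\mathcal{G}\subseteq\binom{\mathbb{N}}{d-1}$ one has $\mathrm{Inc}(\mathcal{C}(\mathcal{G}))\subseteq\mathcal{C}(\mathrm{Inc}(\mathcal{G}))$. Then: (i) for all $k\in\mathbb{N}$ and all finite families $\mathcal{G}\subseteq\binom{\mathbb{N}_{>k}}{d-1}$ one has $\mathrm{Inc}(\mathcal{C}_{>k}(\mathcal{G}))\subseteq\mathcal{C}_{>k}(\mathrm{Inc}(\mathcal{G}))$; (ii) for all finite families $\mathcal{F}\subseteq\binom{\mathbb{N}}{d}$ one has $\mathrm{Inc}(\mathcal{C}^{(l)}(\mathcal{F}))\subseteq\mathcal{C}^{(l)}(\mathrm{Inc}(\mathcal{F}))$ and $\mathrm{Inc}(\mathcal{C}^{(r)}(\mathcal{F}))\subseteq\mathcal{C}^{(r)}(\mathrm{Inc}(\mathcal{F}))$.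
   Context: $\mathbb{N}=\{1,2,3,\dots\}$, $\mathbb{N}_{>k}=\{k+1,k+2,\dots\}$. $\binom{S}{d}$ is the set of $d$-element subsets of $S$; elements are written $\mathbf{u}=(u_1,\ldots,u_d)$ with $u_1<\cdots<u_d$, and $(k,\widehat{\mathbf{u}})$ denotes $\{k\}\cup\widehat{\mathbf{u}}$ (with $k<\min\widehat{\mathbf u}$), $(\widehat{\mathbf{u}},k)$ denotes $\widehat{\mathbf{u}}\cup\{k\}$ (with $\max\widehat{\mathbf u}<k$). Squashed order: $\mathbf{u}<\mathbf{v}$ iff the largest element of the symmetric difference of $\mathbf{u},\mathbf{v}$ belongs to $\mathbf{v}$. For finite $\mathcal{G}\subseteq\binom{\mathbb{N}}{e}$, $\mathcal{C}(\mathcal{G})$ is the set of the $|\mathcal{G}|$ smallest elements of $\binom{\mathbb{N}}{e}$; for finite $\mathcal{G}\subseteq\binom{\mathbb{N}_{>k}}{e}$, $\mathcal{C}_{>k}(\mathcal{G})$ is the set of the $|\mathcal{G}|$ smallest elements of $\binom{\mathbb{N}_{>k}}{e}$. $\mathrm{Inc}_1$ is the set of maps $\pi\colon\mathbb{N}\to\mathbb{N}$ with $\pi(j)<\pi(j+1)$ and $\pi(j)\le j+1$ for all $j$, acting by $\pi(\mathbf{u})=(\pi(u_1),\ldots,\pi(u_e))$; $\mathrm{Inc}(\mathcal{G})=\{\pi(\mathbf{u})\mid\mathbf{u}\in\mathcal{G},\pi\in\mathrm{Inc}_1\}$. For $\mathcal{F}\subseteq\binom{\mathbb{N}}{d}$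 and $k\ge1$: $\widehat{\mathcal{F}}_{1,k}=\{\widehat{\mathbf{u}}\mid (k,\widehat{\mathbf{u}})\in\mathcal{F}\}\subseteq\binom{\mathbb{N}_{>k}}{d-1}$, $\widehat{\mathcal{F}}_{d,k}=\{\widehat{\mathbf{u}}\mid(\widehat{\mathbf{u}},k)\in\mathcal{F}\}$. Left partial compression: $\mathcal{C}^{(l)}(\mathcal{F})=\bigcup_{k\ge1}\{(k,\widehat{\mathbf{u}})\mid\widehat{\mathbf{u}}\in\mathcal{C}_{>k}(\widehat{\mathcal{F}}_{1,k})\}$; right partial compression: $\mathcal{C}^{(r)}(\mathcal{F})=\bigcup_{k\ge1}\{(\widehat{\mathbf{u}},k)\mid\widehat{\mathbf{u}}\in\mathcal{C}(\widehat{\mathcal{F}}_{d,k})\}$. *)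

theory Defs
  imports Main
begin

text \<open>Positive integers are modelled as nat values > 0, so the paper's N is {0<..}
  and N_{>k} is {k<..}.\<close>

definition binom :: "nat set \<Rightarrow> nat \<Rightarrow> nat set set" where
  "binom S e = {u. u \<subseteq> S \<and> finite u \<and> card u = e}"

definition sq_less :: "nat set \<Rightarrow> nat set \<Rightarrow> bool" where
  "sq_less u v \<longleftrightarrow> u \<noteq> v \<and> Max ((u - v) \<union> (v - u)) \<in> v"

text \<open>The |G| smallest elements of binom N_{>k} e in squashed order: those elements
  having fewer than |G| predecessors.\<close>
definition comp_gt :: "nat \<Rightarrow> nat \<Rightarrow> nat set set \<Rightarrow> nat set set" where
  "comp_gt k e G = {u \<in> binom {k<..} e.
      card {v \<in> binom {k<..} e. sq_less v u} < card G}"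

definition comp :: "nat \<Rightarrow> nat set set \<Rightarrow> nat set set" where
  "comp e G = comp_gt 0 e G"

definition Inc1 :: "(nat \<Rightarrow> nat) set" where
  "Inc1 = {\<pi>. \<forall>j\<ge>1. 1 \<le> \<pi> j \<and> \<pi> j < \<pi> (Suc j) \<and> \<pi> j \<le> j + 1}"

definition Inc :: "nat set set \<Rightarrow> nat set set" where
  "Inc G = {\<pi> ` u | u \<pi>. u \<in> G \<and> \<pi> \<in> Inc1}"

definition hat_first :: "nat set set \<Rightarrow> nat \<Rightarrow> nat set set" where
  "hat_first F k = {w. (\<forall>x\<in>w. k < x) \<and> insert k w \<in> F}"

definition hat_last :: "nat set set \<Rightarrow> nat \<Rightarrow> nat set set" where
  "hat_last F k = {w. (\<forall>x\<in>w. x < k) \<and> insert k w \<in> F}"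

definition comp_left :: "nat \<Rightarrow> nat set set \<Rightarrow> nat set set" where
  "comp_left d F = (\<Union>k\<in>{1..}. {insert k w | w. w \<in> comp_gt k (d - 1) (hat_first F k)})"

definition comp_right :: "nat \<Rightarrow> nat set set \<Rightarrow> nat set set" where
  "comp_right d F = (\<Union>k\<in>{1..}. {insert k w | w. w \<in> comp (d - 1) (hat_last F k)})"

end

theory Submission imports Defs begin

text \<open>On a finite set of positive integers every \<open>\<pi> \<in> Inc1\<close> acts as a map \<open>skip m\<close>, which fixes
  the integers below \<open>m\<close> and shifts the others up by one; so \<open>Inc G\<close> is the family of all
  \<open>skip m ` u\<close> with \<open>u \<in> G\<close>. The position of a set in squashed order only counts smaller sets,
  and it is invariant under monotone injections, in particular under the translation of
  \<open>{k<..}\<close> onto \<open>{0<..}\<close>. Since this translation commutes with skip maps, (i) is the hypothesis in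
  disguise.

  For (ii) write a set as \<open>(k, w)\<close>, resp. \<open>(w, k)\<close>. A skip map either fixes \<open>k\<close> or moves it
  to \<open>k + 1\<close>. Left compression: if \<open>k\<close> is fixed, (i) applies to the fibre over \<open>k\<close>; otherwise
  the whole set is translated by one, which keeps its position in squashed order. Right
  compression: if \<open>k\<close> is fixed, so is \<open>w\<close>, because a squashed initial segment of a family of
  sets below \<open>k\<close> again consists of sets below \<open>k\<close>; otherwise the hypothesis applies to the
  fibre over \<open>k\<close>. In every case the new fibre contains the image of the old one.\<close>

definition skip :: "nat \<Rightarrow> nat \<Rightarrow> nat" where
  "skip m j = (if j < m then j else Suc j)"

definition shift_down :: "nat \<Rightarrow> nat set \<Rightarrow> nat set" where
  "shift_down k u = (\<lambda>x. x - k) ` u"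

definition sq_preds :: "nat \<Rightarrow> nat \<Rightarrow> nat set \<Rightarrow> nat set set" where
  "sq_preds k e u = {v \<in> binom {k<..} e. sq_less v u}"

subsection \<open>Skip maps\<close>

lemma skip_in_Inc1: "skip m \<in> Inc1"
  by (auto simp: skip_def Inc1_def)

lemma skip_0 [simp]: "skip 0 = Suc"
  by (auto simp: skip_def)

lemma le_skip: "j \<le> skip m j"
  by (simp add: skip_def)

lemma Inc1_ge_self:
  assumes "\<pi> \<in> Inc1" "1 \<le> j"
  shows "j \<le> \<pi> j"
  using assms(2)
proof (induction j rule: dec_induct)
  case base
  then show ?case using assms(1) by (auto simp: Inc1_def)
next
  case (step n)
  then show ?case using assms(1) by (fastforce simp: Inc1_def)
qed

text \<open>The first \<open>m \<ge> 1\<close> with \<open>\<pi> m \<noteq> m\<close> must have \<open>\<pi> m = m + 1\<close>, and from then on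
  \<open>\<pi> j \<le> j + 1\<close> together with strict monotonicity forces \<open>\<pi> j = j + 1\<close>.\<close>
lemma Inc1_eq_skip_on:
  assumes "\<pi> \<in> Inc1" "finite u" "u \<subseteq> {0<..}"
  obtains m where "\<And>j. j \<in> u \<Longrightarrow> \<pi> j = skip m j"
proof (cases "\<exists>j\<ge>1. \<pi> j \<noteq> j")
  case True
  define m where "m = (LEAST j. j \<ge> 1 \<and> \<pi> j \<noteq> j)"
  have m: "m \<ge> 1" "\<pi> m \<noteq> m" using LeastI_ex[OF True] unfolding m_def by auto
  have below: "\<pi> j = j" if "j \<ge> 1" "j < m" for j
    using not_less_Least[of j "\<lambda>j. j \<ge> 1 \<and> \<pi> j \<noteq> j"] that unfolding m_def by auto
  have above: "\<pi> j = Suc j" if "j \<ge> m" for j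
    using that
  proof (induction j rule: dec_induct)
    case base
    show ?case
      using Inc1_ge_self[OF assms(1) m(1)] m assms(1) by (fastforce simp: Inc1_def)
  next
    case (step n)
    then have "n \<ge> 1" using m(1) by simp
    then have "\<pi> n < \<pi> (Suc n)" "\<pi> (Suc n) \<le> Suc n + 1"
      using assms(1) by (auto simp: Inc1_def)
    then show ?case using step by simp
  qed
  show thesis
    by (rule that[of m]) (use assms(3) below above in \<open>force simp: skip_def\<close>)
next
  case False
  show thesis
  proof (rule that[of "Suc (Max u)"])
    fix j assume "j \<in> u"
    then show "\<pi> j = skip (Suc (Max u)) j"
      using False assms(2,3) by (auto simp: skip_def le_imp_less_Suc)
  qed
qed

lemma skip_image_in_Inc: "u \<in> G \<Longrightarrow> skip m ` u \<in> Inc G"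
  using skip_in_Inc1 unfolding Inc_def by blast

lemma IncE:
  assumes "z \<in> Inc G" "\<And>u. u \<in> G \<Longrightarrow> finite u \<and> u \<subseteq> {0<..}"
  obtains u m where "u \<in> G" "z = skip m ` u"
proof -
  obtain u \<pi> where z: "z = \<pi> ` u" "u \<in> G" "\<pi> \<in> Inc1"
    using assms(1) by (auto simp: Inc_def)
  obtain m where "\<And>j. j \<in> u \<Longrightarrow> \<pi> j = skip m j"
    using Inc1_eq_skip_on[OF z(3)] assms(2)[OF z(2)] by blast
  then have "z = skip m ` u" using z(1) by auto
  then show thesis using that z(2) by blast
qed

lemma Inc_binomE:
  assumes "z \<in> Inc G" "G \<subseteq> binom {k<..} e"
  obtains u m where "u \<in> G" "z = skip m ` u"
proof -
  have "finite u \<and> u \<subseteq> {0<..}" if "u \<in> G" for u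
    using assms(2) that by (fastforce simp: binom_def)
  then show thesis using assms(1) that by (elim IncE)
qed

lemma finite_Inc:
  assumes "finite G" "G \<subseteq> binom {k<..} e"
  shows "finite (Inc G)"
proof -
  have "Inc G \<subseteq> Pow {..Suc (Max (\<Union>G))}"
  proof
    fix z assume "z \<in> Inc G"
    then obtain u m where "u \<in> G" "z = skip m ` u"
      using assms(2) by (rule Inc_binomE)
    moreover have "x \<le> Max (\<Union>G)" if "x \<in> u" "u \<in> G" for x u
      using assms that by (intro Max_ge) (auto simp: binom_def)
    ultimately show "z \<in> Pow {..Suc (Max (\<Union>G))}"
      by (force simp: skip_def)
  qed
  then show ?thesis using finite_subset by blast
qed

subsection \<open>Squashed order and compression\<close>

lemma sq_less_image_iff:
  assumes "mono f" "inj_on f A" "u \<subseteq> A" "v \<subseteq> A" "finite u" "finite v"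
  shows "sq_less (f ` u) (f ` v) \<longleftrightarrow> sq_less u v"
proof (cases "u = v")
  case True
  then show ?thesis by (simp add: sq_less_def)
next
  case False
  define S where "S = (u - v) \<union> (v - u)"
  have "f ` (u - v) = f ` u - f ` v" "f ` (v - u) = f ` v - f ` u"
    using assms(2-4) by (intro inj_on_image_set_diff; auto)+
  then have img: "(f ` u - f ` v) \<union> (f ` v - f ` u) = f ` S"
    unfolding S_def by (simp add: image_Un)
  have neq: "f ` u \<noteq> f ` v"
    using False assms(2-4) inj_on_image_eq_iff by metis
  have S: "S \<noteq> {}" "finite S" "S \<subseteq> A"
    using False assms(3-6) unfolding S_def by auto
  then have "Max (f ` S) = f (Max S)" "Max S \<in> A"
    using mono_Max_commute[OF assms(1)] Max_in by auto
  then have "Max (f ` S) \<in> f ` v \<longleftrightarrow> Max S \<in> v"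
    using assms(2,4) by (simp add: inj_on_image_mem_iff)
  then show ?thesis
    unfolding sq_less_def img using False neq by (simp add: S_def)
qed

lemma comp_gt_iff: "u \<in> comp_gt k e G \<longleftrightarrow> u \<in> binom {k<..} e \<and> card (sq_preds k e u) < card G"
  by (simp add: comp_gt_def sq_preds_def)

lemma comp_gt_card_mono: "card G \<le> card H \<Longrightarrow> comp_gt k e G \<subseteq> comp_gt k e H"
  by (auto simp: comp_gt_iff)

lemma comp_gt_subset_mono: "finite H \<Longrightarrow> G \<subseteq> H \<Longrightarrow> comp_gt k e G \<subseteq> comp_gt k e H"
  by (intro comp_gt_card_mono card_mono)

lemma finite_sq_preds:
  assumes "finite u"
  shows "finite (sq_preds k e u)"
proof -
  have "v \<subseteq> {..Max u}" if "v \<in> sq_preds k e u" for v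
  proof
    fix y assume y: "y \<in> v"
    define S where "S = (v - u) \<union> (u - v)"
    have "sq_less v u" "finite v" using that by (auto simp: sq_preds_def binom_def)
    then have max: "Max S \<in> u" "finite S" using assms unfolding sq_less_def S_def by auto
    show "y \<in> {..Max u}"
    proof (cases "y \<in> u")
      case True
      then show ?thesis using assms by simp
    next
      case False
      then have "y \<le> Max S" using y max(2) by (simp add: S_def)
      also have "Max S \<le> Max u" using max(1) assms by simp
      finally show ?thesis by simp
    qed
  qed
  then have "sq_preds k e u \<subseteq> Pow {..Max u}" by blast
  then show ?thesis using finite_subset by blast
qed

lemma bij_betw_shift_down_binom: "bij_betw (shift_down k) (binom {k<..} e) (binom {0<..} e)"
proof (rule bij_betw_byWitness[where f' = "(`) (\<lambda>x. x + k)"])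
  show "\<forall>v \<in> binom {k<..} e. (\<lambda>x. x + k) ` shift_down k v = v"
  proof
    fix v assume "v \<in> binom {k<..} e"
    then have "\<And>x. x \<in> v \<Longrightarrow> x - k + k = x" by (auto simp: binom_def)
    then show "(\<lambda>x. x + k) ` shift_down k v = v"
      by (simp add: shift_down_def image_image)
  qed
  show "\<forall>v \<in> binom {0<..} e. shift_down k ((\<lambda>x. x + k) ` v) = v"
    by (simp add: shift_down_def image_image)
  show "shift_down k ` binom {k<..} e \<subseteq> binom {0<..} e"
  proof
    fix v' assume "v' \<in> shift_down k ` binom {k<..} e"
    then obtain v where v: "v \<in> binom {k<..} e" "v' = (\<lambda>x. x - k) ` v"
      by (auto simp: shift_down_def)
    moreover have "inj_on (\<lambda>x. x - k) v"
      using v(1) by (auto simp: binom_def inj_on_def)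
    ultimately have "card v' = card v" by (simp add: card_image)
    then show "v' \<in> binom {0<..} e" using v by (auto simp: binom_def)
  qed
  show "(`) (\<lambda>x. x + k) ` binom {0<..} e \<subseteq> binom {k<..} e"
    by (auto simp: binom_def card_image)
qed

lemma card_sq_preds_shift_down:
  assumes u: "u \<in> binom {k<..} e"
  shows "card (sq_preds k e u) = card (sq_preds 0 e (shift_down k u))"
proof -
  have "sq_less (shift_down k v) (shift_down k u) \<longleftrightarrow> sq_less v u"
    if "v \<in> binom {k<..} e" for v
    unfolding shift_down_def using u that
    by (intro sq_less_image_iff[where A = "{k<..}"]) (auto simp: mono_def inj_on_def binom_def)
  then have "bij_betw (shift_down k) (sq_preds k e u) (sq_preds 0 e (shift_down k u))"
    unfolding sq_preds_def by (intro bij_betw_Collect[OF bij_betw_shift_down_binom])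
  then show ?thesis by (rule bij_betw_same_card)
qed

lemma comp_gt_iff_shift_down:
  "u \<in> comp_gt k e G \<longleftrightarrow> u \<subseteq> {k<..} \<and> shift_down k u \<in> comp e G"
proof -
  have "u \<in> binom {k<..} e \<longleftrightarrow> u \<subseteq> {k<..} \<and> shift_down k u \<in> binom {0<..} e"
  proof
    assume "u \<in> binom {k<..} e"
    then show "u \<subseteq> {k<..} \<and> shift_down k u \<in> binom {0<..} e"
      using bij_betw_apply[OF bij_betw_shift_down_binom] by (auto simp: binom_def)
  next
    assume u: "u \<subseteq> {k<..} \<and> shift_down k u \<in> binom {0<..} e"
    moreover have "inj_on (\<lambda>x. x - k) u"
      using u by (auto simp: inj_on_def)
    ultimately show "u \<in> binom {k<..} e"
      by (auto simp: binom_def shift_down_def card_image dest: finite_imageD)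
  qed
  then show ?thesis
    unfolding comp_def comp_gt_iff using card_sq_preds_shift_down by auto
qed

lemma shift_down_skip_image:
  assumes "u \<subseteq> {k<..}"
  shows "shift_down k (skip m ` u) = skip (m - k) ` shift_down k u"
proof -
  have "skip m x - k = skip (m - k) (x - k)" if "x \<in> u" for x
    using assms that by (auto simp: skip_def)
  then show ?thesis
    unfolding shift_down_def image_image by (rule image_cong[OF refl])
qed

lemma Inc_shift_down_subset:
  assumes "G \<subseteq> binom {k<..} e"
  shows "Inc (shift_down k ` G) \<subseteq> shift_down k ` Inc G"
proof
  fix y assume "y \<in> Inc (shift_down k ` G)"
  moreover have "shift_down k ` G \<subseteq> binom {0<..} e"
    using assms bij_betw_apply[OF bij_betw_shift_down_binom] by blast
  ultimately obtain v m where v: "v \<in> G" "y = skip m ` shift_down k v"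
    by (elim Inc_binomE) auto
  have "v \<subseteq> {k<..}" using v(1) assms by (auto simp: binom_def)
  then have "y = shift_down k (skip (m + k) ` v)"
    using v(2) by (simp add: shift_down_skip_image)
  then show "y \<in> shift_down k ` Inc G"
    using skip_image_in_Inc[OF v(1)] by blast
qed

lemma Inc_comp_gt_subset:
  assumes hyp: "\<And>G. finite G \<Longrightarrow> G \<subseteq> binom {0<..} e \<Longrightarrow> Inc (comp e G) \<subseteq> comp e (Inc G)"
    and G: "finite G" "G \<subseteq> binom {k<..} e"
  shows "Inc (comp_gt k e G) \<subseteq> comp_gt k e (Inc G)"
proof
  fix z assume "z \<in> Inc (comp_gt k e G)"
  moreover have "comp_gt k e G \<subseteq> binom {k<..} e" by (auto simp: comp_gt_iff)
  ultimately obtain u m where u: "u \<in> comp_gt k e G" "z = skip m ` u"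
    by (rule Inc_binomE)
  have u_gt: "u \<subseteq> {k<..}" using u(1) by (simp add: comp_gt_iff_shift_down)
  define G' where "G' = shift_down k ` G"
  have inj: "inj_on (shift_down k) G"
    using G(2) bij_betw_shift_down_binom by (metis bij_betw_def inj_on_subset)
  have G': "finite G'" "G' \<subseteq> binom {0<..} e" "card G' = card G"
    unfolding G'_def using G bij_betw_apply[OF bij_betw_shift_down_binom] card_image[OF inj]
    by auto
  have "shift_down k u \<in> comp e G"
    using u(1) comp_gt_iff_shift_down by blast
  then have "shift_down k u \<in> comp e G'"
    using G'(3) comp_gt_card_mono[of G G'] unfolding comp_def by auto
  then have "skip (m - k) ` shift_down k u \<in> comp e (Inc G')"
    using hyp[OF G'(1,2)] skip_image_in_Inc by blast
  moreover have "card (Inc G') \<le> card (Inc G)"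
  proof -
    have "card (Inc G') \<le> card (shift_down k ` Inc G)"
      using Inc_shift_down_subset[OF G(2)] finite_Inc[OF G] unfolding G'_def
      by (intro card_mono) auto
    also have "\<dots> \<le> card (Inc G)" by (rule card_image_le[OF finite_Inc[OF G]])
    finally show ?thesis .
  qed
  moreover have "shift_down k z = skip (m - k) ` shift_down k u"
    using u(2) u_gt by (simp add: shift_down_skip_image)
  moreover have "z \<subseteq> {k<..}"
    using u(2) u_gt le_skip[of _ m] by (auto intro: less_le_trans)
  ultimately show "z \<in> comp_gt k e (Inc G)"
    using comp_gt_card_mono[of "Inc G'" "Inc G" 0 e] comp_gt_iff_shift_down[of z k e]
    unfolding comp_def by auto
qed

lemma Suc_image_in_comp_gt:
  assumes "w \<in> comp_gt k e G" "card G \<le> card H"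
  shows "Suc ` w \<in> comp_gt (Suc k) e H"
proof -
  have w: "w \<subseteq> {k<..}" "shift_down k w \<in> comp e G"
    using assms(1) by (simp_all only: comp_gt_iff_shift_down)
  have "shift_down (Suc k) (Suc ` w) = shift_down k w"
    by (simp add: shift_down_def image_image)
  also have "\<dots> \<in> comp e H"
    using w(2) comp_gt_card_mono[OF assms(2)] unfolding comp_def by (rule subsetD[rotated])
  finally show ?thesis
    using w(1) by (auto simp only: comp_gt_iff_shift_down)
qed

text \<open>A squashed initial segment of sets below \<open>k\<close> consists of sets below \<open>k\<close>: a set
  containing some \<open>x \<ge> k\<close> is preceded by all of them.\<close>
lemma comp_gt_subset_lessThan:
  assumes w: "w \<in> comp_gt j e G" and G: "G \<subseteq> binom {j<..} e" "\<forall>v\<in>G. v \<subseteq> {..<k}"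
  shows "w \<subseteq> {..<k}"
proof (rule ccontr)
  assume "\<not> w \<subseteq> {..<k}"
  then obtain x where x: "x \<in> w" "k \<le> x" by (auto simp: subset_iff not_less)
  have wb: "w \<in> binom {j<..} e" "card (sq_preds j e w) < card G"
    using w by (auto simp: comp_gt_iff)
  have "G \<subseteq> sq_preds j e w"
  proof
    fix v assume v: "v \<in> G"
    define S where "S = (v - w) \<union> (w - v)"
    have v_lt: "v \<subseteq> {..<k}" using v G(2) by blast
    have "finite S" using v G(1) wb(1) unfolding S_def binom_def by auto
    moreover have "x \<in> S" using x v_lt unfolding S_def by auto
    ultimately have "x \<le> Max S" "Max S \<in> S" by (auto intro: Max_in)
    then have "Max S \<in> w" using v_lt x unfolding S_def by auto
    moreover have "v \<noteq> w" using x v_lt by auto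
    ultimately have "sq_less v w" unfolding sq_less_def S_def by simp
    then show "v \<in> sq_preds j e w" using v G(1) by (auto simp: sq_preds_def)
  qed
  then have "card G \<le> card (sq_preds j e w)"
    using finite_sq_preds wb(1) by (intro card_mono) (auto simp: binom_def)
  then show False using wb(2) by simp
qed

subsection \<open>Fibres of the partial compressions\<close>

lemma hat_first_subset_binom:
  assumes "F \<subseteq> binom {0<..} d"
  shows "hat_first F k \<subseteq> binom {k<..} (d - 1)"
proof
  fix w assume "w \<in> hat_first F k"
  then have w: "\<forall>x\<in>w. k < x" "insert k w \<in> F" by (auto simp: hat_first_def)
  then have "finite w" "card (insert k w) = d" "k \<notin> w" using assms by (auto simp: binom_def)
  then show "w \<in> binom {k<..} (d - 1)" using w(1) by (auto simp: binom_def)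
qed

lemma hat_last_subset_binom:
  assumes "F \<subseteq> binom {0<..} d"
  shows "hat_last F k \<subseteq> binom {0<..} (d - 1)"
proof
  fix w assume "w \<in> hat_last F k"
  then have w: "\<forall>x\<in>w. x < k" "insert k w \<in> F" by (auto simp: hat_last_def)
  then have "finite w" "card (insert k w) = d" "k \<notin> w" "w \<subseteq> {0<..}"
    using assms by (auto simp: binom_def)
  then show "w \<in> binom {0<..} (d - 1)" by (auto simp: binom_def)
qed

lemma finite_hat_first: "finite F \<Longrightarrow> finite (hat_first F k)"
proof (erule finite_surj[where f = "\<lambda>u. u - {k}"], rule subsetI)
  fix w assume "w \<in> hat_first F k"
  then have "insert k w \<in> F" "w = insert k w - {k}" by (auto simp: hat_first_def)
  then show "w \<in> (\<lambda>u. u - {k}) ` F" by blast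
qed

lemma finite_hat_last: "finite F \<Longrightarrow> finite (hat_last F k)"
proof (erule finite_surj[where f = "\<lambda>u. u - {k}"], rule subsetI)
  fix w assume "w \<in> hat_last F k"
  then have "insert k w \<in> F" "w = insert k w - {k}" by (auto simp: hat_last_def)
  then show "w \<in> (\<lambda>u. u - {k}) ` F" by blast
qed

lemma Inc_hat_first_subset:
  assumes "F \<subseteq> binom {0<..} d"
  shows "Inc (hat_first F k) \<subseteq> hat_first (Inc F) k"
proof
  fix y assume "y \<in> Inc (hat_first F k)"
  then obtain v m where v: "v \<in> hat_first F k" "y = skip m ` v"
    using hat_first_subset_binom[OF assms] by (rule Inc_binomE)
  have v_gt: "\<forall>x\<in>v. k < x" "insert k v \<in> F" using v(1) by (auto simp: hat_first_def)
  have "skip (max m (Suc k)) ` insert k v = insert k y"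
    using v_gt(1) unfolding v(2) by (auto simp: skip_def image_iff)
  then have "insert k y \<in> Inc F"
    using skip_image_in_Inc[OF v_gt(2)] by metis
  moreover have "\<forall>x\<in>y. k < x"
    using v_gt(1) le_skip[of _ m] unfolding v(2) by (auto intro: less_le_trans)
  ultimately show "y \<in> hat_first (Inc F) k" by (simp add: hat_first_def)
qed

lemma Suc_image_hat_first_subset: "(`) Suc ` hat_first F k \<subseteq> hat_first (Inc F) (Suc k)"
proof
  fix y assume "y \<in> (`) Suc ` hat_first F k"
  then obtain v where v: "\<forall>x\<in>v. k < x" "insert k v \<in> F" "y = Suc ` v"
    by (auto simp: hat_first_def)
  have "insert (Suc k) y \<in> Inc F"
    using skip_image_in_Inc[OF v(2), of 0] v(3) by simp
  then show "y \<in> hat_first (Inc F) (Suc k)"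
    using v(1,3) by (auto simp: hat_first_def)
qed

lemma hat_last_subset_Inc: "hat_last F k \<subseteq> hat_last (Inc F) k"
proof
  fix v assume "v \<in> hat_last F k"
  then have v: "\<forall>x\<in>v. x < k" "insert k v \<in> F" by (auto simp: hat_last_def)
  then have "skip (Suc k) ` insert k v = insert k v" by (auto simp: skip_def image_iff)
  then have "insert k v \<in> Inc F"
    using skip_image_in_Inc[OF v(2)] by metis
  then show "v \<in> hat_last (Inc F) k"
    using v(1) by (simp add: hat_last_def)
qed

lemma Inc_hat_last_subset:
  assumes "F \<subseteq> binom {0<..} d"
  shows "Inc (hat_last F k) \<subseteq> hat_last (Inc F) (Suc k)"
proof
  fix y assume "y \<in> Inc (hat_last F k)"
  then obtain v m where v: "v \<in> hat_last F k" "y = skip m ` v"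
    using hat_last_subset_binom[OF assms] by (rule Inc_binomE)
  have v_lt: "\<forall>x\<in>v. x < k" "insert k v \<in> F" using v(1) by (auto simp: hat_last_def)
  have "skip (min m k) ` insert k v = insert (Suc k) y"
    using v_lt(1) unfolding v(2) by (auto simp: skip_def image_iff)
  then have "insert (Suc k) y \<in> Inc F"
    using skip_image_in_Inc[OF v_lt(2)] by metis
  moreover have "\<forall>x\<in>y. x < Suc k"
    using v_lt(1) unfolding v(2) by (auto simp: skip_def)
  ultimately show "y \<in> hat_last (Inc F) (Suc k)" by (simp add: hat_last_def)
qed

subsection \<open>Partial compressions\<close>

lemma Inc_comp_left_subset:
  assumes comp_gt_Inc: "\<And>k G. finite G \<Longrightarrow> G \<subseteq> binom {k<..} (d - 1) \<Longrightarrow>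
      Inc (comp_gt k (d - 1) G) \<subseteq> comp_gt k (d - 1) (Inc G)"
    and F: "finite F" "F \<subseteq> binom {0<..} d"
  shows "Inc (comp_left d F) \<subseteq> comp_left d (Inc F)"
proof
  fix z assume "z \<in> Inc (comp_left d F)"
  then obtain y m where "y \<in> comp_left d F" "z = skip m ` y"
    by (elim IncE) (fastforce simp: comp_left_def comp_gt_iff binom_def)
  then obtain k w where k: "1 \<le> k" and w: "w \<in> comp_gt k (d - 1) (hat_first F k)"
    and z: "z = insert (skip m k) (skip m ` w)"
    by (auto simp: comp_left_def)
  have fin: "finite (hat_first (Inc F) j)" for j
    using finite_hat_first finite_Inc F by blast
  show "z \<in> comp_left d (Inc F)"
  proof (cases "k < m")
    case True
    have "skip m ` w \<in> comp_gt k (d - 1) (Inc (hat_first F k))"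
      using comp_gt_Inc[OF finite_hat_first[OF F(1)] hat_first_subset_binom[OF F(2)]]
        skip_image_in_Inc[OF w] by blast
    also have "\<dots> \<subseteq> comp_gt k (d - 1) (hat_first (Inc F) k)"
      using fin Inc_hat_first_subset[OF F(2)] by (rule comp_gt_subset_mono)
    finally show ?thesis
      using True k unfolding z comp_left_def by (auto simp: skip_def)
  next
    case False
    have "w \<subseteq> {k<..}" using w by (auto simp: comp_gt_iff binom_def)
    then have skip_eq: "skip m k = Suc k" "skip m ` w = Suc ` w"
      using False by (auto simp: skip_def)
    have "card (hat_first F k) = card ((`) Suc ` hat_first F k)"
      by (rule card_image[symmetric]) (simp add: inj_on_def inj_image_eq_iff)
    also have "\<dots> \<le> card (hat_first (Inc F) (Suc k))"
      using fin Suc_image_hat_first_subset by (rule card_mono)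
    finally have "Suc ` w \<in> comp_gt (Suc k) (d - 1) (hat_first (Inc F) (Suc k))"
      using w by (rule Suc_image_in_comp_gt[rotated])
    then show ?thesis
      unfolding z skip_eq comp_left_def by auto
  qed
qed

lemma Inc_comp_right_subset:
  assumes hyp: "\<And>G. finite G \<Longrightarrow> G \<subseteq> binom {0<..} (d - 1) \<Longrightarrow>
      Inc (comp (d - 1) G) \<subseteq> comp (d - 1) (Inc G)"
    and F: "finite F" "F \<subseteq> binom {0<..} d"
  shows "Inc (comp_right d F) \<subseteq> comp_right d (Inc F)"
proof
  fix z assume "z \<in> Inc (comp_right d F)"
  then obtain y m where "y \<in> comp_right d F" "z = skip m ` y"
    by (elim IncE) (fastforce simp: comp_right_def comp_def comp_gt_iff binom_def)
  then obtain k w where k: "1 \<le> k" and w: "w \<in> comp (d - 1) (hat_last F k)"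
    and z: "z = insert (skip m k) (skip m ` w)"
    by (auto simp: comp_right_def)
  have fin: "finite (hat_last (Inc F) j)" for j
    using finite_hat_last finite_Inc F by blast
  show "z \<in> comp_right d (Inc F)"
  proof (cases "k < m")
    case True
    have "w \<subseteq> {..<k}"
      using w hat_last_subset_binom[OF F(2)] unfolding comp_def
      by (rule comp_gt_subset_lessThan) (auto simp: hat_last_def)
    then have skip_eq: "skip m k = k" "skip m ` w = w"
      using True by (auto simp: skip_def image_iff)
    have "w \<in> comp (d - 1) (hat_last (Inc F) k)"
      using w comp_gt_subset_mono[OF fin hat_last_subset_Inc] unfolding comp_def by blast
    then show ?thesis
      using k unfolding z skip_eq comp_right_def by auto
  next
    case False
    have "skip m ` w \<in> comp (d - 1) (Inc (hat_last F k))"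
      using hyp[OF finite_hat_last[OF F(1)] hat_last_subset_binom[OF F(2)]]
        skip_image_in_Inc[OF w] by blast
    also have "\<dots> \<subseteq> comp (d - 1) (hat_last (Inc F) (Suc k))"
      unfolding comp_def using fin Inc_hat_last_subset[OF F(2)] by (rule comp_gt_subset_mono)
    finally show ?thesis
      using False unfolding z comp_right_def by (auto simp: skip_def)
  qed
qed

theorem lemma3p12:
  fixes d :: nat
  assumes "d \<ge> 2"
    and hyp: "\<And>G. finite G \<Longrightarrow> G \<subseteq> binom {0<..} (d - 1) \<Longrightarrow> Inc (comp (d - 1) G) \<subseteq> comp (d - 1) (Inc G)"
  shows "(\<forall>k\<ge>1. \<forall>G. finite G \<and> G \<subseteq> binom {k<..} (d - 1) \<longrightarrow>
            Inc (comp_gt k (d - 1) G) \<subseteq> comp_gt k (d - 1) (Inc G))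
       \<and> (\<forall>F. finite F \<and> F \<subseteq> binom {0<..} d \<longrightarrow>
            Inc (comp_left d F) \<subseteq> comp_left d (Inc F) \<and>
            Inc (comp_right d F) \<subseteq> comp_right d (Inc F))"
proof -
  have comp_gt_Inc: "Inc (comp_gt k (d - 1) G) \<subseteq> comp_gt k (d - 1) (Inc G)"
    if "finite G" "G \<subseteq> binom {k<..} (d - 1)" for k G
    using hyp that by (rule Inc_comp_gt_subset)
  show ?thesis
    using comp_gt_Inc Inc_comp_left_subset[OF comp_gt_Inc] Inc_comp_right_subset[OF hyp]
    by simp
qed

end
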